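(* Let $A\in\mathbb{R}^{n\times n}$ be stable and Metzler, $B\in\mathbb{R}^{n\times m}_{\ge 0}$, $C\in\mathbb{R}^{p\times n}_{\ge 0}$. Let $A_r^{(0)}$, $\epsilon$, $\gamma$ and the set $S:=S_{A_r}(A_r^{(0)},\epsilon,\gamma)$ be as described in the context, and let $f$ be as defined in the context. Then there exist positive constants $c_1$ and $c_2$ such that for all $(A_r)_1,(A_r)_2\in S$, $B_r\in\mathbb{R}^{r\times m}$ and $C_r\in\mathbb{R}^{p\times r}$, $$\|\nabla_{A_r}f((A_r)_1,B_r,C_r)-\nabla_{A_r}f((A_r)_2,B_r,C_r)\|_{\rm F}\le L_{A_r}(B_r,C_r)\,\|(A_r)_1-(A_r)_2\|_{\rm F},$$ where $L_{A_r}(B_r,C_r):=(c_1+c_2\|B_r\|_{\rm F}\|C_r\|_{\rm F})\|B_r\|_{\rm F}\|C_r\|_{\rm F}$.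
   Context: Setting: $\mathcal{C}_1,\dots,\mathcal{C}_r$ is a partition of $\{1,\dots,n\}$ into nonempty sets, $\Pi\in\mathbb{R}^{n\times r}$ with $\Pi_{ij}=1$ if $i\in\mathcal{C}_j$ and $0$ otherwise, $\alpha\ge0$, and $A_r^{(0)}:=(\Pi^\top\Pi)^{-1}\Pi^\top A\Pi-\alpha I_r$ is assumed stable (all eigenvalues with negative real part) and irreducible (the directed graph with edge $i\to j$ when $i\ne j$, $(A_r^{(0)})_{ij}\ne0$ is strongly connected). Let $\mu_1<0$ be the real eigenvalue of $A_r^{(0)}$ whose real part strictly exceeds that of all other eigenvalues, with positive right/left eigenvectors $v_1,w_1$, $w_1^\top v_1=1$. For $\epsilon>0$ with $\mu_1+\epsilon\le0$ put $\bar A_r:=A_r^{(0)}-(\mu_1+\epsilon)v_1w_1^\top$, and for $\gamma>0$ with $-\gamma I_r\le A_r^{(0)}$ (entrywise) put $S_{A_r}(A_r^{(0)},\epsilon,\gamma):=\{A_r\in\mathbb{R}^{r\times r}: -\gamma I_r\le A_r\le\bar A_r\}$ (entrywise); all its elements are stable. For stable $A_r$, define $f(A_r,B_r,C_r):=\tfrac12{\rm tr}(C_rPC_r^\top-2C_rX^\top C^\top)$, where $X\in\mathbb{R}^{n\times r}$ and $P\in\mathbb{R}^{r\times r}$ are the unique solutions of $AX+XA_r^\top+BB_r^\top=0$ and $A_rP+PA_r^\top+B_rB_r^\top=0$. $\nabla_{A_r}f$ is the partial gradient with respect to $A_r$ for the Frobenius inner product; $\|\cdot\|_{\rm F}$ is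 the Frobenius norm. *)

theory Defs
  imports "HOL-Analysis.Analysis"
begin

text \<open>Matrices are rendered as \<open>real^'c^'r\<close> (rows indexed by \<open>'r\<close>, columns by \<open>'c\<close>).
  The Euclidean norm/inner product on \<open>real^'c^'r\<close> is the Frobenius norm/inner product.\<close>

definition cmat :: "real^'c^'r \<Rightarrow> complex^'c^'r" where
  "cmat M = (\<chi> i j. complex_of_real (M$i$j))"

definition is_eigenvalue :: "real^'n^'n \<Rightarrow> complex \<Rightarrow> bool" where
  "is_eigenvalue M lam \<longleftrightarrow> (\<exists>v::complex^'n. v \<noteq> 0 \<and> cmat M *v v = lam *s v)"

definition stable :: "real^'n^'n \<Rightarrow> bool" where
  "stable M \<longleftrightarrow> (\<forall>lam. is_eigenvalue M lam \<longrightarrow> Re lam < 0)"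

definition metzler :: "real^'n^'n \<Rightarrow> bool" where
  "metzler M \<longleftrightarrow> (\<forall>i j. i \<noteq> j \<longrightarrow> M$i$j \<ge> 0)"

definition irreducible_mat :: "real^'n^'n \<Rightarrow> bool" where
  "irreducible_mat M \<longleftrightarrow>
     (\<forall>i j. i \<noteq> j \<longrightarrow> (i, j) \<in> {(k, l). k \<noteq> l \<and> M$k$l \<noteq> 0}\<^sup>+)"

definition part_mat :: "('n \<Rightarrow> 'r) \<Rightarrow> real^'r^'n" where
  "part_mat cl = (\<chi> i j. if cl i = j then 1 else 0)"

definition mtrace :: "real^'n^'n \<Rightarrow> real" where
  "mtrace M = (\<Sum>i\<in>UNIV. M$i$i)"

definition Xsol :: "real^'n^'n \<Rightarrow> real^'m^'n \<Rightarrow> real^'r^'r \<Rightarrow> real^'m^'r \<Rightarrow> real^'r^'n" where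
  "Xsol A B Ar Br = (THE X. A ** X + X ** transpose Ar + B ** transpose Br = 0)"

definition Psol :: "real^'r^'r \<Rightarrow> real^'m^'r \<Rightarrow> real^'r^'r" where
  "Psol Ar Br = (THE P. Ar ** P + P ** transpose Ar + Br ** transpose Br = 0)"

definition fobj :: "real^'n^'n \<Rightarrow> real^'m^'n \<Rightarrow> real^'n^'p
    \<Rightarrow> real^'r^'r \<Rightarrow> real^'m^'r \<Rightarrow> real^'r^'p \<Rightarrow> real" where
  "fobj A B C Ar Br Cr =
     (1/2) * mtrace (Cr ** Psol Ar Br ** transpose Cr
                     - 2 *\<^sub>R (Cr ** transpose (Xsol A B Ar Br) ** transpose C))"

definition grad_Ar :: "real^'n^'n \<Rightarrow> real^'m^'n \<Rightarrow> real^'n^'p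
    \<Rightarrow> real^'r^'r \<Rightarrow> real^'m^'r \<Rightarrow> real^'r^'p \<Rightarrow> real^'r^'r" where
  "grad_Ar A B C Ar Br Cr =
     (THE G. ((\<lambda>X. fobj A B C X Br Cr) has_derivative (\<lambda>H. G \<bullet> H)) (at Ar))"

end

theory Submission
  imports Defs
begin

text \<open>
  The objective depends on \<open>Ar\<close> only through the solutions \<open>P\<close>, \<open>X\<close> of two Sylvester
  equations, so its gradient is read off from the directional derivatives \<open>dP\<close>, \<open>dX\<close>, which
  solve the same equations with right-hand sides built from \<open>H P + P H^T\<close> and \<open>X H^T\<close>.
  Everything then rests on a bound \<open>norm Z \<le> K * norm (A1 Z + Z M^T)\<close> that is uniform over
  \<open>M \<in> S\<close>. Each \<open>Ar \<in> S\<close> is Metzler with \<open>Ar v1 \<le> - eps v1\<close>, because it lies entrywise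
  below the deflated matrix, whose eigenvalue at \<open>v1\<close> is \<open>- eps\<close>; a stable Metzler \<open>A\<close> has a
  positive \<open>w\<close> with \<open>A w < 0\<close>; and a weighted maximum principle turns these vectors into such a
  \<open>K\<close>. The resolvent identity for Sylvester equations makes \<open>dP\<close> and \<open>dX\<close> Lipschitz in \<open>Ar\<close>
  with constants of order \<open>K^3 norm Br^2\<close> and \<open>K^3 norm B norm Br\<close>, whence \<open>c2 ~ K^3\<close> and
  \<open>c1 ~ K^3 norm B norm C\<close>. Besides the hypotheses on \<open>A\<close>, only the eigenvector equation for
  \<open>v1\<close>, its positivity and \<open>eps > 0\<close> are used.
\<close>

section \<open>Frobenius norm\<close>

lemma norm_matrix_sq:
  fixes X :: "real^'c::finite^'r::finite"
  shows "(norm X)^2 = (\<Sum>i\<in>UNIV. \<Sum>j\<in>UNIV. (X$i$j)^2)"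
  unfolding power2_norm_eq_inner inner_vec_def by (simp add: power2_eq_square)

lemma norm_transpose:
  fixes X :: "real^'c::finite^'r::finite"
  shows "norm (transpose X) = norm X"
proof -
  have "(norm (transpose X))^2 = (norm X)^2"
    unfolding norm_matrix_sq transpose_def by simp (rule sum.swap)
  then show ?thesis by (simp add: power2_eq_iff_nonneg)
qed

lemma abs_matrix_entry_le_norm:
  fixes X :: "real^'c::finite^'r::finite"
  shows "\<bar>X$i$j\<bar> \<le> norm X"
  using component_le_norm_cart Finite_Cartesian_Product.norm_nth_le by (rule order_trans)

lemma norm_matrix_le_sum_abs:
  fixes X :: "real^'c::finite^'r::finite"
  shows "norm X \<le> (\<Sum>i\<in>UNIV. \<Sum>j\<in>UNIV. \<bar>X$i$j\<bar>)"
proof -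
  have "norm X \<le> (\<Sum>i\<in>UNIV. \<bar>norm (X$i)\<bar>)"
    using norm_le_l1_cart[of "\<chi> i. norm (X$i)"] by (simp add: norm_vec_def L2_set_def)
  also have "\<dots> \<le> (\<Sum>i\<in>UNIV. \<Sum>j\<in>UNIV. \<bar>X$i$j\<bar>)"
    by (intro sum_mono) (simp add: norm_le_l1_cart)
  finally show ?thesis .
qed

lemma norm_matrix_mult_le:
  fixes X :: "real^'k::finite^'r::finite" and Y :: "real^'c::finite^'k"
  shows "norm (X ** Y) \<le> norm X * norm Y"
proof -
  have entry: "((X ** Y)$i$j)^2 \<le> (norm (X$i) * norm (column j Y))^2" for i j
  proof -
    have "\<bar>(X ** Y)$i$j\<bar> \<le> norm (X$i) * norm (column j Y)"
      using Cauchy_Schwarz_ineq2[of "X$i" "column j Y"]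
      by (simp add: matrix_matrix_mult_def inner_vec_def column_def)
    then show ?thesis by (simp add: abs_le_square_iff[symmetric])
  qed
  have "(norm (X ** Y))^2 \<le> (\<Sum>i\<in>UNIV. \<Sum>j\<in>UNIV. (norm (X$i))^2 * (norm (column j Y))^2)"
    unfolding norm_matrix_sq[of "X ** Y"] power_mult_distrib[symmetric]
    by (intro sum_mono entry)
  also have "\<dots> = (\<Sum>i\<in>UNIV. (norm (X$i))^2) * (\<Sum>j\<in>UNIV. (norm (column j Y))^2)"
    by (simp add: sum_product)
  also have "(\<Sum>i\<in>UNIV. (norm (X$i))^2) = (norm X)^2"
    by (simp add: power2_norm_eq_inner inner_vec_def)
  also have "(\<Sum>j\<in>UNIV. (norm (column j Y))^2) = (norm Y)^2"
    unfolding norm_matrix_sq[of Y] power2_norm_eq_inner inner_vec_def column_def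
    by (simp add: power2_eq_square) (rule sum.swap)
  finally have "(norm (X ** Y))^2 \<le> (norm X * norm Y)^2" by (simp add: power_mult_distrib)
  then show ?thesis by (rule power2_le_imp_le) simp
qed

interpretation matrix_mult: bounded_bilinear
  "(**) :: real^'k::finite^'r::finite \<Rightarrow> real^'c::finite^'k \<Rightarrow> real^'c^'r"
proof
  show "\<exists>K. \<forall>X Y. norm ((X::real^'k^'r) ** (Y::real^'c^'k)) \<le> norm X * norm Y * K"
    using norm_matrix_mult_le by (metis mult.right_neutral)
qed (simp_all add: matrix_matrix_mult_def vec_eq_iff sum.distrib algebra_simps sum_distrib_left)

lemma transpose_add: "transpose (X + Y) = transpose X + transpose (Y::real^'c::finite^'r::finite)"
  by (simp add: transpose_def vec_eq_iff)

lemma transpose_diff: "transpose (X - Y) = transpose X - transpose (Y::real^'c::finite^'r::finite)"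
  by (simp add: transpose_def vec_eq_iff)

lemma transpose_zero: "transpose (0::real^'c::finite^'r::finite) = 0"
  by (simp add: transpose_def vec_eq_iff)

lemma abs_mtrace_le:
  fixes W :: "real^'p::finite^'p"
  shows "\<bar>mtrace W\<bar> \<le> real CARD('p) * norm W"
proof -
  have "\<bar>mtrace W\<bar> \<le> (\<Sum>i\<in>UNIV. \<bar>W$i$i\<bar>)" unfolding mtrace_def by (rule sum_abs)
  also have "\<dots> \<le> (\<Sum>i\<in>(UNIV::'p set). norm W)" by (intro sum_mono abs_matrix_entry_le_norm)
  finally show ?thesis by simp
qed

lemma mtrace_add: "mtrace (X + Y) = mtrace X + mtrace Y"
  by (simp add: mtrace_def sum.distrib)

lemma mtrace_diff: "mtrace (X - Y) = mtrace X - mtrace Y"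
  by (simp add: mtrace_def sum_subtractf)

lemma mtrace_scaleR: "mtrace (c *\<^sub>R X) = c * mtrace X"
  by (simp add: mtrace_def sum_distrib_left)

lemmas matrix_algebra_simps = matrix_mult.add_left matrix_mult.add_right
  matrix_mult.diff_left matrix_mult.diff_right matrix_mult.scaleR_left matrix_mult.scaleR_right
  matrix_mult.zero_left matrix_mult.zero_right transpose_add transpose_diff transpose_zero
  transpose_scalar

section \<open>Sylvester equations\<close>

definition sylvester :: "real^'k::finite^'k \<Rightarrow> real^'r::finite^'r \<Rightarrow> real^'r^'k \<Rightarrow> real^'r^'k" where
  "sylvester A1 M X = A1 ** X + X ** transpose M"

definition sylvester_sol :: "real^'k::finite^'k \<Rightarrow> real^'r::finite^'r \<Rightarrow> real^'r^'k \<Rightarrow> real^'r^'k" where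
  "sylvester_sol A1 M R = (THE X. A1 ** X + X ** transpose M + R = 0)"

definition sylvester_coercive :: "real^'k::finite^'k \<Rightarrow> real^'r::finite^'r \<Rightarrow> real \<Rightarrow> bool" where
  "sylvester_coercive A1 M K \<longleftrightarrow> (\<forall>X::real^'r^'k. norm X \<le> K * norm (sylvester A1 M X))"

lemma linear_sylvester: "linear (sylvester A1 M)"
  by (rule linearI) (simp_all add: sylvester_def matrix_algebra_simps scaleR_add_right)

lemmas sylvester_diff = linear_diff[OF linear_sylvester]

lemma sylvester_add_coeffs:
  "sylvester (A1 + D1) (M + D2) X = sylvester A1 M X + sylvester D1 D2 X"
  by (simp add: sylvester_def matrix_algebra_simps)

lemma norm_sylvester_le: "norm (sylvester D1 D2 Z) \<le> (norm D1 + norm D2) * norm Z"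
proof -
  have "norm (Z ** transpose D2) \<le> norm Z * norm D2"
    using norm_matrix_mult_le[of Z "transpose D2"] by (simp add: norm_transpose)
  then show ?thesis
    unfolding sylvester_def
    using norm_triangle_ineq[of "D1 ** Z" "Z ** transpose D2"] norm_matrix_mult_le[of D1 Z]
    by (simp add: algebra_simps)
qed

lemma sylvester_coercive_nonneg:
  assumes "sylvester_coercive (A1::real^'k::finite^'k) (M::real^'r::finite^'r) K"
  shows "0 \<le> K"
proof -
  have "0 < norm (1::real^'r^'k)" by simp
  also have "\<dots> \<le> K * norm (sylvester A1 M 1)" using assms unfolding sylvester_coercive_def by blast
  finally show ?thesis by (simp add: zero_less_mult_iff)
qed

lemma sylvester_coercive_mono:
  "sylvester_coercive A1 M K \<Longrightarrow> K \<le> K' \<Longrightarrow> sylvester_coercive A1 M K'"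
  unfolding sylvester_coercive_def by (meson mult_right_mono norm_ge_zero order_trans)

lemma sylvester_coercive_eq_0:
  "sylvester_coercive A1 M K \<Longrightarrow> sylvester A1 M X = 0 \<Longrightarrow> X = 0"
  unfolding sylvester_coercive_def by (metis mult_zero_right norm_le_zero_iff norm_zero)

lemma sylvester_sol_unique:
  assumes coer: "sylvester_coercive A1 M K" and Y: "sylvester A1 M Y = - R"
  shows "sylvester_sol A1 M R = Y"
  unfolding sylvester_sol_def
proof (rule the_equality)
  show "A1 ** Y + Y ** transpose M + R = 0" using Y by (simp add: sylvester_def)
next
  fix X assume "A1 ** X + X ** transpose M + R = 0"
  then have "sylvester A1 M X = - R" by (simp add: sylvester_def eq_neg_iff_add_eq_0)
  then have "sylvester A1 M (X - Y) = 0" using Y by (simp add: sylvester_diff)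
  then have "X - Y = 0" by (rule sylvester_coercive_eq_0[OF coer])
  then show "X = Y" by simp
qed

lemma sylvester_sol:
  assumes coer: "sylvester_coercive A1 M K"
  shows "sylvester A1 M (sylvester_sol A1 M R) = - R"
proof -
  have "inj (sylvester A1 M)"
    using linear_injective_0[OF linear_sylvester] sylvester_coercive_eq_0[OF coer] by blast
  then have "surj (sylvester A1 M)"
    by (rule linear_injective_imp_surjective[OF linear_sylvester]) simp
  then obtain X where "sylvester A1 M X = - R" by (metis surjD)
  then show ?thesis using sylvester_sol_unique[OF coer] by simp
qed

lemma norm_sylvester_sol_le:
  "sylvester_coercive A1 M K \<Longrightarrow> norm (sylvester_sol A1 M R) \<le> K * norm R"
  using sylvester_sol[of A1 M K R] unfolding sylvester_coercive_def by (metis norm_minus_cancel)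

lemma linear_sylvester_sol:
  assumes coer: "sylvester_coercive A1 M K"
  shows "linear (sylvester_sol A1 M)"
  by (rule linearI; rule sylvester_sol_unique[OF coer])
    (simp_all add: linear_add[OF linear_sylvester] linear_scale[OF linear_sylvester] sylvester_sol[OF coer])

lemma sylvester_coercive_perturb:
  assumes coer: "sylvester_coercive A1 M K"
    and small: "2 * K * (norm (A1' - A1) + norm (M' - M)) \<le> 1"
  shows "sylvester_coercive A1' M' (2 * K)"
  unfolding sylvester_coercive_def
proof
  fix X
  let ?\<delta> = "norm (A1' - A1) + norm (M' - M)"
  have K0: "0 \<le> K" by (rule sylvester_coercive_nonneg[OF coer])
  have split: "sylvester A1 M X = sylvester A1' M' X - sylvester (A1' - A1) (M' - M) X"
    using sylvester_add_coeffs[of A1 "A1' - A1" M "M' - M" X] by simp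
  have "norm (sylvester A1 M X) \<le> norm (sylvester A1' M' X) + ?\<delta> * norm X"
    unfolding split
    using norm_triangle_ineq4[of "sylvester A1' M' X" "sylvester (A1' - A1) (M' - M) X"]
      norm_sylvester_le[of "A1' - A1" "M' - M" X]
    by linarith
  then have "K * norm (sylvester A1 M X) \<le> K * (norm (sylvester A1' M' X) + ?\<delta> * norm X)"
    by (rule mult_left_mono[OF _ K0])
  then have "K * norm (sylvester A1 M X) \<le> K * norm (sylvester A1' M' X) + K * (?\<delta> * norm X)"
    by (simp only: distrib_left)
  moreover have "norm X \<le> K * norm (sylvester A1 M X)"
    using coer unfolding sylvester_coercive_def by blast
  moreover have "2 * (K * (?\<delta> * norm X)) \<le> norm X"
    using mult_right_mono[OF small norm_ge_zero[of X]] by (simp add: mult_ac)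
  ultimately show "norm X \<le> 2 * K * norm (sylvester A1' M' X)" by linarith
qed

lemma sylvester_sol_resolvent_identity:
  assumes coer: "sylvester_coercive A1 M K" and coer': "sylvester_coercive A1' M' K'"
  shows "sylvester_sol A1' M' R - sylvester_sol A1 M R
    = sylvester_sol A1 M (sylvester (A1' - A1) (M' - M) (sylvester_sol A1' M' R))"
proof -
  let ?Z = "sylvester_sol A1 M R" and ?Z' = "sylvester_sol A1' M' R"
  have "sylvester A1' M' ?Z' = sylvester A1 M ?Z' + sylvester (A1' - A1) (M' - M) ?Z'"
    using sylvester_add_coeffs[of A1 "A1' - A1" M "M' - M"] by simp
  then have "sylvester A1 M (?Z' - ?Z) = - sylvester (A1' - A1) (M' - M) ?Z'"
    by (simp add: sylvester_diff sylvester_sol[OF coer] sylvester_sol[OF coer'])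
  then show ?thesis by (rule sylvester_sol_unique[OF coer, symmetric])
qed

lemma norm_sylvester_sol_diff_le:
  assumes coer: "sylvester_coercive A1 M K" and coer': "sylvester_coercive A1' M' K'"
  shows "norm (sylvester_sol A1' M' R - sylvester_sol A1 M R)
    \<le> K * K' * (norm (A1' - A1) + norm (M' - M)) * norm R"
proof -
  let ?\<delta> = "norm (A1' - A1) + norm (M' - M)"
  have "norm (sylvester_sol A1' M' R - sylvester_sol A1 M R)
      \<le> K * (?\<delta> * norm (sylvester_sol A1' M' R))"
    unfolding sylvester_sol_resolvent_identity[OF coer coer']
    by (rule order_trans[OF norm_sylvester_sol_le[OF coer]])
      (rule mult_left_mono[OF norm_sylvester_le sylvester_coercive_nonneg[OF coer]])
  also have "\<dots> \<le> K * (?\<delta> * (K' * norm R))"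
    using sylvester_coercive_nonneg[OF coer] norm_sylvester_sol_le[OF coer']
    by (intro mult_left_mono) auto
  finally show ?thesis by (simp add: mult_ac)
qed

lemma norm_sylvester_sol_sylvester_le:
  assumes coer: "sylvester_coercive A1 M K"
  shows "norm (sylvester_sol A1 M (sylvester D1 D2 Z)) \<le> K * ((norm D1 + norm D2) * norm Z)"
  using norm_sylvester_sol_le[OF coer] mult_left_mono[OF norm_sylvester_le sylvester_coercive_nonneg[OF coer]]
  by (rule order_trans)

lemma norm_sylvester_sol_remainder_le:
  assumes coer: "sylvester_coercive A1 M K" and coer': "sylvester_coercive A1' M' K'"
  shows "norm (sylvester_sol A1' M' R - sylvester_sol A1 M R
      - sylvester_sol A1 M (sylvester (A1' - A1) (M' - M) (sylvester_sol A1 M R)))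
    \<le> K^2 * K' * (norm (A1' - A1) + norm (M' - M))^2 * norm R"
proof -
  let ?\<delta> = "norm (A1' - A1) + norm (M' - M)"
  let ?Z = "sylvester_sol A1 M R" and ?Z' = "sylvester_sol A1' M' R"
  have "?Z' - ?Z - sylvester_sol A1 M (sylvester (A1' - A1) (M' - M) ?Z)
      = sylvester_sol A1 M (sylvester (A1' - A1) (M' - M) ?Z')
        - sylvester_sol A1 M (sylvester (A1' - A1) (M' - M) ?Z)"
    by (simp only: sylvester_sol_resolvent_identity[OF coer coer'])
  also have "\<dots> = sylvester_sol A1 M (sylvester (A1' - A1) (M' - M) (?Z' - ?Z))"
    by (simp add: sylvester_diff linear_diff[OF linear_sylvester_sol[OF coer]])
  also have "norm \<dots> \<le> K * (?\<delta> * norm (?Z' - ?Z))"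
    by (rule norm_sylvester_sol_sylvester_le[OF coer])
  also have "\<dots> \<le> K * (?\<delta> * (K * K' * ?\<delta> * norm R))"
    using sylvester_coercive_nonneg[OF coer] norm_sylvester_sol_diff_le[OF coer coer']
    by (intro mult_left_mono) auto
  finally show ?thesis by (simp add: power2_eq_square mult_ac)
qed

lemma norm_sylvester_sol_directional_diff_le:
  assumes coer: "sylvester_coercive A1 M K" and coer': "sylvester_coercive A1' M' K"
  shows "norm (sylvester_sol A1' M' (sylvester F1 F2 (sylvester_sol A1' M' R))
      - sylvester_sol A1 M (sylvester F1 F2 (sylvester_sol A1 M R)))
    \<le> 2 * K^3 * (norm F1 + norm F2) * (norm (A1' - A1) + norm (M' - M)) * norm R"
proof -
  let ?\<delta> = "norm (A1' - A1) + norm (M' - M)" and ?e = "norm F1 + norm F2"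
  let ?Z = "sylvester_sol A1 M R" and ?Z' = "sylvester_sol A1' M' R"
  have K0: "0 \<le> K" by (rule sylvester_coercive_nonneg[OF coer])
  have split: "sylvester_sol A1' M' (sylvester F1 F2 ?Z') - sylvester_sol A1 M (sylvester F1 F2 ?Z)
    = (sylvester_sol A1' M' (sylvester F1 F2 ?Z') - sylvester_sol A1 M (sylvester F1 F2 ?Z'))
      + sylvester_sol A1 M (sylvester F1 F2 (?Z' - ?Z))"
    by (simp add: sylvester_diff linear_diff[OF linear_sylvester_sol[OF coer]])
  have "norm (sylvester_sol A1' M' (sylvester F1 F2 ?Z') - sylvester_sol A1 M (sylvester F1 F2 ?Z'))
      \<le> K * K * ?\<delta> * norm (sylvester F1 F2 ?Z')"
    by (rule norm_sylvester_sol_diff_le[OF coer coer'])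
  also have "\<dots> \<le> K * K * ?\<delta> * (?e * (K * norm R))"
    using K0 order_trans[OF norm_sylvester_le mult_left_mono[OF norm_sylvester_sol_le[OF coer']]]
    by (intro mult_left_mono) auto
  finally have first: "norm (sylvester_sol A1' M' (sylvester F1 F2 ?Z') - sylvester_sol A1 M (sylvester F1 F2 ?Z'))
      \<le> K^3 * ?e * ?\<delta> * norm R"
    by (simp add: power3_eq_cube mult_ac)
  have "norm (sylvester_sol A1 M (sylvester F1 F2 (?Z' - ?Z))) \<le> K * (?e * norm (?Z' - ?Z))"
    by (rule norm_sylvester_sol_sylvester_le[OF coer])
  also have "\<dots> \<le> K * (?e * (K * K * ?\<delta> * norm R))"
    using K0 norm_sylvester_sol_diff_le[OF coer coer'] by (intro mult_left_mono) auto
  finally have second: "norm (sylvester_sol A1 M (sylvester F1 F2 (?Z' - ?Z))) \<le> K^3 * ?e * ?\<delta> * norm R"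
    by (simp add: power3_eq_cube mult_ac)
  have "norm (sylvester_sol A1' M' (sylvester F1 F2 ?Z') - sylvester_sol A1 M (sylvester F1 F2 ?Z))
      \<le> K^3 * ?e * ?\<delta> * norm R + K^3 * ?e * ?\<delta> * norm R"
    unfolding split by (rule order_trans[OF norm_triangle_ineq add_mono[OF first second]])
  then show ?thesis by (simp only: mult_2[symmetric] mult.assoc)
qed

section \<open>Metzler matrices\<close>

lemma obtain_argmax:
  fixes f :: "'a::finite \<Rightarrow> real"
  obtains i where "\<And>k. f k \<le> f i"
proof -
  have "Max (range f) \<in> range f" by (rule Max_in) auto
  then obtain i where "f i = Max (range f)" by (metis rangeE)
  then show thesis using that[of i] by simp
qed

lemma matrix_vector_mult_split_diag:
  "(A *v y)$i = A$i$i * y$i + (\<Sum>k\<in>UNIV - {i}. A$i$k * y$k)"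
  for A :: "real^'k::finite^'k"
  unfolding matrix_vector_mult_def by (simp add: sum.remove[of UNIV i])

lemma metzler_offdiag_bound:
  fixes A :: "real^'k::finite^'k" and x y :: "real^'k"
  assumes metzler: "metzler A" and x_pos: "\<forall>k. 0 < x$k"
    and Ax: "(A *v x)$i \<le> - a * x$i" and y_le: "\<forall>k. \<bar>y$k\<bar> \<le> s * x$k"
  shows "A$i$i \<le> - a"
    and "\<bar>(A *v y)$i - A$i$i * y$i\<bar> \<le> (- a - A$i$i) * (s * x$i)"
proof -
  let ?S = "\<Sum>k\<in>UNIV - {i}. A$i$k * x$k"
  have offdiag: "0 \<le> A$i$k" if "k \<in> UNIV - {i}" for k
    using metzler that unfolding metzler_def by auto
  have "0 \<le> ?S" using offdiag x_pos by (intro sum_nonneg) (simp add: less_imp_le)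
  then have "A$i$i * x$i \<le> - a * x$i"
    using Ax matrix_vector_mult_split_diag[of A x i] by linarith
  then show "A$i$i \<le> - a" using x_pos by (meson mult_right_le_imp_le)
  have "\<bar>(A *v y)$i - A$i$i * y$i\<bar> \<le> (\<Sum>k\<in>UNIV - {i}. \<bar>A$i$k * y$k\<bar>)"
    unfolding matrix_vector_mult_split_diag[of A y i] by (simp add: sum_abs)
  also have "\<dots> \<le> (\<Sum>k\<in>UNIV - {i}. A$i$k * (s * x$k))"
    using offdiag y_le by (intro sum_mono) (simp add: abs_mult mult_left_mono)
  also have "\<dots> = s * ?S" by (simp add: sum_distrib_left mult_ac)
  also have "\<dots> \<le> s * (- a * x$i - A$i$i * x$i)"
  proof (rule mult_left_mono)
    show "?S \<le> - a * x$i - A$i$i * x$i" using Ax matrix_vector_mult_split_diag[of A x i] by linarith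
    have "0 \<le> s * x$i" by (rule order_trans[OF abs_ge_zero y_le[rule_format]])
    then show "0 \<le> s" using x_pos[rule_format, of i] by (auto simp: zero_le_mult_iff)
  qed
  finally show "\<bar>(A *v y)$i - A$i$i * y$i\<bar> \<le> (- a - A$i$i) * (s * x$i)"
    by (simp add: algebra_simps)
qed

lemma sylvester_entry:
  "(sylvester A1 M X)$i$j = (A1 *v column j X)$i + (M *v row i X)$j"
  by (simp add: sylvester_def matrix_matrix_mult_def matrix_vector_mult_def transpose_def
      column_def row_def mult.commute)

lemma obtain_max_weighted_entry:
  fixes X :: "real^'c::finite^'r::finite" and x :: "real^'r" and v :: "real^'c"
  assumes x_pos: "\<forall>k. 0 < x$k" and v_pos: "\<forall>l. 0 < v$l"
  obtains i j t where "\<bar>X$i$j\<bar> = t * (x$i * v$j)" and "\<And>k l. \<bar>X$k$l\<bar> \<le> t * (x$k * v$l)"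
proof -
  define ratio where "ratio = (\<lambda>(k, l). \<bar>X$k$l\<bar> / (x$k * v$l))"
  obtain p where max: "\<And>q. ratio q \<le> ratio p" using obtain_argmax by blast
  obtain i j where p: "p = (i, j)" by (cases p)
  have pos: "0 < x$k * v$l" for k l using x_pos v_pos by simp
  have nz: "x$k \<noteq> 0" "v$l \<noteq> 0" for k l using x_pos v_pos by (metis less_irrefl)+
  show thesis
  proof
    show "\<bar>X$i$j\<bar> = ratio p * (x$i * v$j)" by (simp add: p ratio_def nz)
    show "\<bar>X$k$l\<bar> \<le> ratio p * (x$k * v$l)" for k l
      using max[of "(k, l)"] pos[of k l] by (simp add: ratio_def pos_divide_le_eq)
  qed
qed

text \<open>At an entry where \<open>\<bar>X$k$l\<bar> / (x$k * v$l)\<close> is maximal, the diagonals of \<open>A1\<close> and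
  \<open>M\<close> dominate the off-diagonal parts.\<close>
lemma sylvester_entry_ge_at_max_ratio:
  fixes A1 :: "real^'k::finite^'k" and M :: "real^'r::finite^'r" and x :: "real^'k" and v :: "real^'r"
  assumes A1: "metzler A1" and M: "metzler M"
    and x_pos: "\<forall>k. 0 < x$k" and v_pos: "\<forall>l. 0 < v$l"
    and Ax: "\<forall>i. (A1 *v x)$i \<le> - a * x$i" and Mv: "\<forall>j. (M *v v)$j \<le> - b * v$j"
    and ab: "0 \<le> a + b"
    and Xij: "\<bar>X$i$j\<bar> = t * (x$i * v$j)" and bnd: "\<And>k l. \<bar>X$k$l\<bar> \<le> t * (x$k * v$l)"
  shows "(a + b) * (t * (x$i * v$j)) \<le> \<bar>sylvester A1 M X $ i $ j\<bar>"
proof -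
  have "\<forall>k. \<bar>column j X $ k\<bar> \<le> (t * v$j) * x$k" using bnd by (simp add: column_def mult_ac)
  note A_bound = metzler_offdiag_bound[OF A1 x_pos Ax[rule_format, of i] this]
  have "\<forall>l. \<bar>row i X $ l\<bar> \<le> (t * x$i) * v$l" using bnd by (simp add: row_def mult_ac)
  note M_bound = metzler_offdiag_bound[OF M v_pos Mv[rule_format, of j] this]
  have diag: "\<bar>(A1$i$i + M$j$j) * X$i$j\<bar> = - (A1$i$i + M$j$j) * (t * (x$i * v$j))"
    using A_bound(1) M_bound(1) ab Xij by (simp add: abs_mult)
  have "sylvester A1 M X $ i $ j = (A1$i$i + M$j$j) * X$i$j
      + ((A1 *v column j X)$i - A1$i$i * X$i$j) + ((M *v row i X)$j - M$j$j * X$i$j)"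
    by (simp add: sylvester_entry column_def row_def algebra_simps)
  then have "\<bar>(A1$i$i + M$j$j) * X$i$j\<bar> \<le> \<bar>sylvester A1 M X $ i $ j\<bar>
      + \<bar>(A1 *v column j X)$i - A1$i$i * X$i$j\<bar> + \<bar>(M *v row i X)$j - M$j$j * X$i$j\<bar>"
    by linarith
  then show ?thesis
    using diag A_bound(2) M_bound(2) by (simp add: column_def row_def algebra_simps)
qed

lemma sylvester_coercive_metzler:
  fixes A1 :: "real^'k::finite^'k" and M :: "real^'r::finite^'r" and x :: "real^'k" and v :: "real^'r"
  assumes A1: "metzler A1" and M: "metzler M"
    and x_pos: "\<forall>k. 0 < x$k" and v_pos: "\<forall>l. 0 < v$l"
    and Ax: "\<forall>i. (A1 *v x)$i \<le> - a * x$i" and Mv: "\<forall>j. (M *v v)$j \<le> - b * v$j"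
    and ab: "0 < a + b"
  shows "sylvester_coercive A1 M ((\<Sum>k\<in>UNIV. x$k) * (\<Sum>l\<in>UNIV. v$l)
           / ((a + b) * (Min (range (\<lambda>k. x$k)) * Min (range (\<lambda>l. v$l)))))"
  unfolding sylvester_coercive_def
proof
  fix X :: "real^'r^'k"
  let ?Y = "sylvester A1 M X"
  let ?xmin = "Min (range (\<lambda>k. x$k))" and ?vmin = "Min (range (\<lambda>l. v$l))"
  let ?den = "(a + b) * (?xmin * ?vmin)"
  obtain i j t where Xij: "\<bar>X$i$j\<bar> = t * (x$i * v$j)" and bnd: "\<And>k l. \<bar>X$k$l\<bar> \<le> t * (x$k * v$l)"
    using obtain_max_weighted_entry[OF x_pos v_pos, where X = X] by blast
  have "0 < x$i * v$j" using x_pos v_pos by simp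
  then have t0: "0 \<le> t"
    using order_trans[OF abs_ge_zero bnd[of i j]] by (simp add: zero_le_mult_iff)
  have "(a + b) * (t * (x$i * v$j)) \<le> \<bar>?Y$i$j\<bar>"
    using sylvester_entry_ge_at_max_ratio[OF A1 M x_pos v_pos Ax Mv _ Xij bnd] ab by simp
  moreover have "?xmin * ?vmin \<le> x$i * v$j"
    using x_pos v_pos by (intro mult_mono) (auto simp: less_imp_le intro: Min_le)
  ultimately have "t * ?den \<le> norm ?Y"
    using abs_matrix_entry_le_norm[of ?Y i j] ab t0 mult_left_mono[of _ _ "(a + b) * t"]
    by (fastforce simp: mult_ac)
  moreover have "0 < ?den" using ab x_pos v_pos by (simp add: Min_gr_iff)
  ultimately have t_le: "t \<le> norm ?Y / ?den" by (simp add: pos_le_divide_eq)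
  have "norm X \<le> (\<Sum>k\<in>UNIV. \<Sum>l\<in>UNIV. t * (x$k * v$l))"
    using norm_matrix_le_sum_abs[of X] sum_mono[OF sum_mono[OF bnd]] by (rule order_trans)
  also have "\<dots> = t * ((\<Sum>k\<in>UNIV. x$k) * (\<Sum>l\<in>UNIV. v$l))"
    unfolding sum_product by (simp only: sum_distrib_left)
  also have "\<dots> \<le> norm ?Y / ?den * ((\<Sum>k\<in>UNIV. x$k) * (\<Sum>l\<in>UNIV. v$l))"
    using x_pos v_pos t_le by (intro mult_right_mono mult_nonneg_nonneg sum_nonneg) (auto simp: less_imp_le)
  finally show "norm X \<le> (\<Sum>k\<in>UNIV. x$k) * (\<Sum>l\<in>UNIV. v$l) / ?den * norm ?Y"
    by (simp add: ac_simps)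
qed

section \<open>Stable Metzler matrices\<close>

lemma cmat_mult_of_real_vec:
  "cmat A *v (\<chi> i. complex_of_real (y$i)) = (\<chi> i. complex_of_real ((A *v y)$i))"
  by (simp add: cmat_def matrix_vector_mult_def vec_eq_iff)

lemma stable_real_eigenvalue_neg:
  assumes stable: "stable A" and eig: "A *v y = s *\<^sub>R y" and "y \<noteq> 0"
  shows "s < 0"
proof -
  let ?yc = "\<chi> i. complex_of_real (y$i)"
  have "?yc \<noteq> 0" using \<open>y \<noteq> 0\<close> by (simp add: vec_eq_iff)
  moreover have "cmat A *v ?yc = complex_of_real s *s ?yc"
    by (simp add: cmat_mult_of_real_vec eig vec_eq_iff)
  ultimately have "is_eigenvalue A (complex_of_real s)" unfolding is_eigenvalue_def by blast
  then have "Re (complex_of_real s) < 0" using stable unfolding stable_def by blast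
  then show ?thesis by simp
qed

lemma shift_matrix_vector_mult: "(A - s *\<^sub>R mat 1) *v y = A *v y - s *\<^sub>R (y :: real^'n::finite)"
  by (simp add: matrix_vector_mult_diff_rdistrib scaleR_matrix_vector_assoc[symmetric])

lemma stable_shift_surj:
  fixes A :: "real^'n::finite^'n"
  assumes stable: "stable A" and "0 \<le> s"
  shows "surj ((*v) (A - s *\<^sub>R mat 1))"
proof -
  have "y = 0" if y: "(A - s *\<^sub>R mat 1) *v y = 0" for y
  proof (rule ccontr)
    assume "y \<noteq> 0"
    moreover have "A *v y = s *\<^sub>R y" using y by (simp add: shift_matrix_vector_mult)
    ultimately have "s < 0" using stable_real_eigenvalue_neg[OF stable] by blast
    then show False using \<open>0 \<le> s\<close> by simp
  qed
  then have "inj ((*v) (A - s *\<^sub>R mat 1))"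
    using linear_injective_0[OF matrix_vector_mul_linear] by blast
  then show ?thesis by (rule linear_injective_imp_surjective[OF matrix_vector_mul_linear]) simp
qed

lemma metzler_min_principle:
  fixes A :: "real^'n::finite^'n"
  assumes metzler: "metzler A" and w_pos: "\<forall>i. 0 < w$i" and Aw: "\<forall>i. (A *v w)$i < t * w$i"
    and Ay: "\<forall>i. (A *v y)$i < t * y$i"
  shows "0 < y$k"
proof -
  obtain i where min: "\<And>l. - (y$l / w$l) \<le> - (y$i / w$i)"
    using obtain_argmax[of "\<lambda>l. - (y$l / w$l)"] by blast
  define s where "s = y$i / w$i"
  have y_ge: "s * w$l \<le> y$l" for l using min[of l] w_pos by (simp add: s_def le_divide_eq)
  have y_i: "y$i = s * w$i" using w_pos by (simp add: s_def less_imp_neq[symmetric])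
  have "0 < s"
  proof (rule ccontr)
    assume "\<not> 0 < s"
    have "s * (t * w$i) \<le> s * (A *v w)$i"
      using Aw \<open>\<not> 0 < s\<close> by (simp add: less_imp_le mult_left_mono_neg)
    also have "\<dots> = A$i$i * (s * w$i) + (\<Sum>k\<in>UNIV - {i}. A$i$k * (s * w$k))"
      by (simp add: matrix_vector_mult_split_diag[of A w i] sum_distrib_left algebra_simps)
    also have "\<dots> \<le> A$i$i * (s * w$i) + (\<Sum>k\<in>UNIV - {i}. A$i$k * y$k)"
      using metzler y_ge unfolding metzler_def by (intro add_left_mono sum_mono mult_left_mono) auto
    also have "\<dots> = (A *v y)$i"
      using matrix_vector_mult_split_diag[of A y i] y_i by simp
    finally show False using Ay[rule_format, of i] y_i by (simp add: mult_ac)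
  qed
  then have "0 < s * w$k" using w_pos by simp
  then show ?thesis using y_ge[of k] by linarith
qed

definition has_pos_subeigenvector :: "real^'n::finite^'n \<Rightarrow> real \<Rightarrow> bool" where
  "has_pos_subeigenvector A t \<longleftrightarrow> (\<exists>w. (\<forall>i. 0 < w$i) \<and> (\<forall>i. (A *v w)$i < t * w$i))"

lemma pos_subeigenvector_margin:
  fixes A :: "real^'n::finite^'n"
  assumes w_pos: "\<forall>i. 0 < w$i" and Aw: "\<forall>i. (A *v w)$i < t * w$i"
  shows "\<exists>d>0. \<forall>i. (A *v w)$i \<le> (t - d) * w$i"
proof -
  obtain i where min: "\<And>k. - ((t * w$k - (A *v w)$k) / w$k) \<le> - ((t * w$i - (A *v w)$i) / w$i)"
    using obtain_argmax[of "\<lambda>k. - ((t * w$k - (A *v w)$k) / w$k)"] by blast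
  define d where "d = (t * w$i - (A *v w)$i) / w$i"
  have "0 < d" using w_pos Aw by (simp add: d_def)
  moreover have "(A *v w)$k \<le> (t - d) * w$k" for k
    using min[of k] w_pos by (simp add: d_def le_divide_eq algebra_simps)
  ultimately show ?thesis by blast
qed

lemma has_pos_subeigenvector_mono:
  assumes "has_pos_subeigenvector A t" and "t \<le> t'"
  shows "has_pos_subeigenvector A t'"
proof -
  obtain w where w_pos: "\<forall>i. 0 < w$i" and Aw: "\<forall>i. (A *v w)$i < t * w$i"
    using assms(1) unfolding has_pos_subeigenvector_def by blast
  have "(A *v w)$i < t' * w$i" for i
    using Aw[rule_format, of i] mult_right_mono[OF \<open>t \<le> t'\<close> less_imp_le[OF w_pos[rule_format, of i]]]
    by linarith
  then show ?thesis using w_pos unfolding has_pos_subeigenvector_def by blast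
qed

lemma has_pos_subeigenvector_open:
  assumes "has_pos_subeigenvector A t"
  shows "\<exists>d>0. has_pos_subeigenvector A (t - d)"
proof -
  obtain w where w_pos: "\<forall>i. 0 < w$i" and Aw: "\<forall>i. (A *v w)$i < t * w$i"
    using assms unfolding has_pos_subeigenvector_def by blast
  obtain d where "d > 0" and d: "\<forall>i. (A *v w)$i \<le> (t - d) * w$i"
    using pos_subeigenvector_margin[OF w_pos Aw] by blast
  have "(A *v w)$i < (t - d/2) * w$i" for i
  proof -
    have "(t - d) * w$i < (t - d/2) * w$i"
      using w_pos \<open>d > 0\<close> by (intro mult_strict_right_mono) auto
    then show ?thesis using d[rule_format, of i] by linarith
  qed
  then have "has_pos_subeigenvector A (t - d/2)"
    using w_pos unfolding has_pos_subeigenvector_def by blast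
  then show ?thesis using \<open>d > 0\<close> by (intro exI[of _ "d/2"]) simp
qed

lemma has_pos_subeigenvector_large:
  "has_pos_subeigenvector A ((\<Sum>i\<in>UNIV. \<Sum>j\<in>UNIV. \<bar>A$i$j\<bar>) + 1)"
  unfolding has_pos_subeigenvector_def
proof (intro exI[of _ 1] conjI allI)
  fix i
  have "(A *v 1)$i \<le> (\<Sum>j\<in>UNIV. \<bar>A$i$j\<bar>)"
    by (simp add: matrix_vector_mult_def sum_mono)
  also have "\<dots> \<le> (\<Sum>i\<in>UNIV. \<Sum>j\<in>UNIV. \<bar>A$i$j\<bar>)"
    by (rule member_le_sum) (auto intro: sum_nonneg)
  finally show "(A *v 1)$i < ((\<Sum>i\<in>UNIV. \<Sum>j\<in>UNIV. \<bar>A$i$j\<bar>) + 1) * 1$i" by simp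
qed simp

text \<open>The solution of \<open>(A - T I) z = -1\<close> also satisfies \<open>A z < t z\<close> for \<open>t\<close> slightly
  above \<open>T\<close>, so the minimum principle makes it positive.\<close>
lemma has_pos_subeigenvector_closed:
  fixes A :: "real^'n::finite^'n"
  assumes stable: "stable A" and metzler: "metzler A" and "0 \<le> T"
    and above: "\<And>t. T < t \<Longrightarrow> has_pos_subeigenvector A t"
  shows "has_pos_subeigenvector A T"
proof -
  obtain z where "(A - T *\<^sub>R mat 1) *v z = - 1"
    using stable_shift_surj[OF stable \<open>0 \<le> T\<close>] by (metis surjD)
  then have z: "A *v z - T *\<^sub>R z = - 1" unfolding shift_matrix_vector_mult .
  have Az: "(A *v z)$i = T * z$i - 1" for i
    using arg_cong[OF z, of "\<lambda>v. v$i"] by simp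
  define b where "b = (\<Sum>i\<in>UNIV. \<bar>z$i\<bar>) + 1"
  have "1 \<le> b" by (simp add: b_def sum_nonneg)
  define t where "t = T + 1 / (2 * b)"
  have "T < t" using \<open>1 \<le> b\<close> by (simp add: t_def)
  then obtain w where w_pos: "\<forall>i. 0 < w$i" and Aw: "\<forall>i. (A *v w)$i < t * w$i"
    using above unfolding has_pos_subeigenvector_def by blast
  have "(A *v z)$i < t * z$i" for i
  proof -
    have "\<bar>z$i\<bar> \<le> (\<Sum>i\<in>UNIV. \<bar>z$i\<bar>)" by (rule member_le_sum) auto
    then have "\<bar>z$i\<bar> \<le> b" by (simp add: b_def)
    then have "\<bar>(t - T) * z$i\<bar> \<le> 1 / 2"
      using \<open>1 \<le> b\<close> by (simp add: t_def abs_mult divide_le_eq)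
    then have "- ((t - T) * z$i) \<le> 1 / 2" by (rule abs_le_D2)
    then have "T * z$i - t * z$i \<le> 1 / 2" by (simp add: algebra_simps)
    then show ?thesis unfolding Az by linarith
  qed
  then have "\<forall>i. 0 < z$i \<and> (A *v z)$i < T * z$i"
    using metzler_min_principle[OF metzler w_pos Aw] Az by auto
  then show ?thesis unfolding has_pos_subeigenvector_def by blast
qed

lemma stable_metzler_has_pos_subeigenvector:
  fixes A :: "real^'n::finite^'n"
  assumes stable: "stable A" and metzler: "metzler A"
  shows "has_pos_subeigenvector A 0"
proof -
  let ?S = "{t. 0 \<le> t \<and> has_pos_subeigenvector A t}"
  define T where "T = Inf ?S"
  have "(\<Sum>i\<in>UNIV. \<Sum>j\<in>UNIV. \<bar>A$i$j\<bar>) + 1 \<in> ?S"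
    using has_pos_subeigenvector_large[of A] by (auto intro!: add_nonneg_nonneg sum_nonneg)
  then have ne: "?S \<noteq> {}" by blast
  have bdd: "bdd_below ?S" by (rule bdd_belowI[of _ 0]) simp
  have "0 \<le> T" unfolding T_def by (rule cInf_greatest[OF ne]) simp
  have "has_pos_subeigenvector A t" if "T < t" for t
  proof -
    obtain u where "u \<in> ?S" "u < t" using \<open>T < t\<close> cInf_less_iff[OF ne bdd] unfolding T_def by blast
    then show ?thesis using has_pos_subeigenvector_mono[of A u t] by simp
  qed
  then have PT: "has_pos_subeigenvector A T"
    by (rule has_pos_subeigenvector_closed[OF stable metzler \<open>0 \<le> T\<close>])
  have "T = 0"
  proof (rule ccontr)
    assume "T \<noteq> 0"
    then have "0 < T" using \<open>0 \<le> T\<close> by simp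
    obtain d where "d > 0" and d: "has_pos_subeigenvector A (T - d)"
      using has_pos_subeigenvector_open[OF PT] by blast
    then have "max (T - d) (T / 2) \<in> ?S"
      using \<open>0 < T\<close> has_pos_subeigenvector_mono[OF d, of "max (T - d) (T / 2)"] by simp
    then have "T \<le> max (T - d) (T / 2)" unfolding T_def by (rule cInf_lower[OF _ bdd])
    then show False using \<open>d > 0\<close> \<open>0 < T\<close> by simp
  qed
  then show ?thesis using PT by simp
qed

section \<open>The objective and its gradient\<close>

definition gramian_objective :: "real^'r::finite^'p::finite \<Rightarrow> real^'n::finite^'p
    \<Rightarrow> real^'r^'r \<Rightarrow> real^'r^'n \<Rightarrow> real" where
  "gramian_objective Cr C P X =
     (1/2) * mtrace (Cr ** P ** transpose Cr - 2 *\<^sub>R (Cr ** transpose X ** transpose C))"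

lemma fobj_eq_gramian_objective:
  "fobj A B C Ar Br Cr = gramian_objective Cr C
     (sylvester_sol Ar Ar (Br ** transpose Br)) (sylvester_sol A Ar (B ** transpose Br))"
  by (simp add: fobj_def gramian_objective_def Psol_def Xsol_def sylvester_sol_def)

lemma gramian_objective_add:
  "gramian_objective Cr C (P1 + P2) (X1 + X2) = gramian_objective Cr C P1 X1 + gramian_objective Cr C P2 X2"
  by (simp add: gramian_objective_def matrix_algebra_simps mtrace_add mtrace_diff mtrace_scaleR
      scaleR_add_right algebra_simps)

lemma gramian_objective_scaleR:
  "gramian_objective Cr C (c *\<^sub>R P) (c *\<^sub>R X) = c * gramian_objective Cr C P X"
  by (simp add: gramian_objective_def matrix_algebra_simps mtrace_add mtrace_diff mtrace_scaleR
      scaleR_add_right algebra_simps)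

lemma gramian_objective_diff:
  "gramian_objective Cr C (P1 - P2) (X1 - X2) = gramian_objective Cr C P1 X1 - gramian_objective Cr C P2 X2"
  using gramian_objective_add[of Cr C P2 "P1 - P2" X2 "X1 - X2"] by simp

lemma abs_gramian_objective_le:
  fixes Cr :: "real^'r::finite^'p::finite"
  shows "\<bar>gramian_objective Cr C P X\<bar> \<le> real CARD('p) * norm Cr * (norm Cr * norm P + norm X * norm C)"
proof -
  let ?W1 = "Cr ** P ** transpose Cr" and ?W2 = "Cr ** transpose X ** transpose C"
  have W1: "norm ?W1 \<le> norm Cr * norm P * norm Cr"
    using norm_matrix_mult_le[of "Cr ** P" "transpose Cr"] norm_matrix_mult_le[of Cr P]
    by (simp add: norm_transpose) (meson mult_right_mono norm_ge_zero order_trans)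
  have W2: "norm ?W2 \<le> norm Cr * norm X * norm C"
    using norm_matrix_mult_le[of "Cr ** transpose X" "transpose C"] norm_matrix_mult_le[of Cr "transpose X"]
    by (simp add: norm_transpose) (meson mult_right_mono norm_ge_zero order_trans)
  have "\<bar>gramian_objective Cr C P X\<bar> = (1/2) * \<bar>mtrace (?W1 - 2 *\<^sub>R ?W2)\<bar>"
    by (simp add: gramian_objective_def abs_mult)
  also have "\<dots> \<le> (1/2) * (real CARD('p) * norm (?W1 - 2 *\<^sub>R ?W2))"
    by (intro mult_left_mono abs_mtrace_le) auto
  also have "\<dots> \<le> (1/2) * (real CARD('p) * (norm ?W1 + 2 * norm ?W2))"
    using norm_triangle_ineq4[of ?W1 "2 *\<^sub>R ?W2"] by (intro mult_left_mono) auto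
  also have "\<dots> \<le> (1/2) * (real CARD('p) * (norm Cr * norm P * norm Cr + 2 * (norm Cr * norm X * norm C)))"
    using W1 W2 by (intro mult_left_mono add_mono) auto
  also have "\<dots> \<le> real CARD('p) * (norm Cr * norm P * norm Cr + norm Cr * norm X * norm C)"
  proof -
    have "0 \<le> real CARD('p) * (norm Cr * norm P * norm Cr)" by simp
    then show ?thesis by (simp add: algebra_simps)
  qed
  finally show ?thesis by (simp add: algebra_simps)
qed

definition fobj_deriv :: "real^'n::finite^'n \<Rightarrow> real^'m::finite^'n \<Rightarrow> real^'n^'p::finite
    \<Rightarrow> real^'m^'r::finite \<Rightarrow> real^'r^'p \<Rightarrow> real^'r^'r \<Rightarrow> real^'r^'r \<Rightarrow> real" where
  "fobj_deriv A B C Br Cr Ar H = gramian_objective Cr C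
     (sylvester_sol Ar Ar (sylvester H H (sylvester_sol Ar Ar (Br ** transpose Br))))
     (sylvester_sol A Ar (sylvester 0 H (sylvester_sol A Ar (B ** transpose Br))))"

lemma linear_fobj_deriv:
  assumes "sylvester_coercive A Ar K" and "sylvester_coercive Ar Ar K'"
  shows "linear (fobj_deriv A B C Br Cr Ar)"
proof -
  define P' where "P' = (\<lambda>H. sylvester_sol Ar Ar (sylvester H H (sylvester_sol Ar Ar (Br ** transpose Br))))"
  define X' where "X' = (\<lambda>H. sylvester_sol A Ar (sylvester 0 H (sylvester_sol A Ar (B ** transpose Br))))"
  have PH: "linear (\<lambda>H. sylvester H H Z)" and XH: "linear (\<lambda>H. sylvester 0 H Z')" for Z Z'
    by (rule linearI; simp add: sylvester_def matrix_algebra_simps scaleR_add_right)+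
  have "linear P'"
    using linear_compose[OF PH linear_sylvester_sol[OF assms(2)]] by (simp add: P'_def o_def)
  moreover have "linear X'"
    using linear_compose[OF XH linear_sylvester_sol[OF assms(1)]] by (simp add: X'_def o_def)
  moreover have "fobj_deriv A B C Br Cr Ar = (\<lambda>H. gramian_objective Cr C (P' H) (X' H))"
    by (simp add: fun_eq_iff fobj_deriv_def P'_def X'_def)
  ultimately show ?thesis
    by (auto intro!: linearI simp: linear_add linear_scale gramian_objective_add gramian_objective_scaleR)
qed

lemma has_derivative_of_quadratic_remainder:
  fixes f :: "'a::real_normed_vector \<Rightarrow> real"
  assumes "bounded_linear f'" and "0 < r" and "0 \<le> c"
    and remainder: "\<And>y. norm (y - x) < r \<Longrightarrow> \<bar>f y - f x - f' (y - x)\<bar> \<le> c * (norm (y - x))^2"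
  shows "(f has_derivative f') (at x)"
  unfolding has_derivative_at_alt
proof (intro conjI allI impI \<open>bounded_linear f'\<close>)
  fix e :: real assume "0 < e"
  define d where "d = min r (e / (c + 1))"
  have "0 < d" using \<open>0 < r\<close> \<open>0 < e\<close> \<open>0 \<le> c\<close> by (simp add: d_def)
  moreover have "norm (f y - f x - f' (y - x)) \<le> e * norm (y - x)" if "norm (y - x) < d" for y
  proof -
    have "\<bar>f y - f x - f' (y - x)\<bar> \<le> c * (norm (y - x))^2"
      using remainder[of y] that by (simp add: d_def)
    also have "\<dots> \<le> (c + 1) * norm (y - x) * norm (y - x)"
      using mult_right_mono[of c "c + 1" "norm (y - x) * norm (y - x)"]
      by (simp add: power2_eq_square mult.assoc)
    also have "\<dots> \<le> (c + 1) * (e / (c + 1)) * norm (y - x)"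
      using that \<open>0 \<le> c\<close> by (intro mult_right_mono mult_left_mono) (auto simp: d_def)
    finally show ?thesis using \<open>0 \<le> c\<close> by simp
  qed
  ultimately show "\<exists>d>0. \<forall>y. norm (y - x) < d \<longrightarrow> norm (f y - f x - f' (y - x)) \<le> e * norm (y - x)"
    by blast
qed

definition fobj_hessian_bound :: "real \<Rightarrow> real^'m::finite^'n::finite \<Rightarrow> real^'n^'p::finite
    \<Rightarrow> real^'m^'r::finite \<Rightarrow> real^'r^'p \<Rightarrow> real" where
  "fobj_hessian_bound K B C Br Cr = real CARD('p) * norm Cr
     * (norm Cr * (8 * K^3 * norm (Br ** transpose Br)) + 2 * K^3 * norm (B ** transpose Br) * norm C)"

lemma fobj_hessian_bound_nonneg: "0 \<le> K \<Longrightarrow> 0 \<le> fobj_hessian_bound K B C Br Cr"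
  by (simp add: fobj_hessian_bound_def)

lemma has_derivative_fobj:
  fixes A :: "real^'n::finite^'n" and B :: "real^'m::finite^'n" and C :: "real^'n^'p::finite"
    and Br :: "real^'m^'r::finite" and Cr :: "real^'r^'p" and Ar :: "real^'r^'r"
  assumes coer_A: "sylvester_coercive A Ar K" and coer_Ar: "sylvester_coercive Ar Ar K" and "0 < K"
  shows "((\<lambda>X. fobj A B C X Br Cr) has_derivative fobj_deriv A B C Br Cr Ar) (at Ar)"
proof (rule has_derivative_of_quadratic_remainder)
  let ?RP = "Br ** transpose Br" and ?RX = "B ** transpose Br"
  show "bounded_linear (fobj_deriv A B C Br Cr Ar)"
    using linear_fobj_deriv[OF coer_A coer_Ar] by (simp add: linear_conv_bounded_linear)
  show "0 < 1 / (4 * K)" using \<open>0 < K\<close> by simp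
  show "0 \<le> fobj_hessian_bound K B C Br Cr"
    using \<open>0 < K\<close> by (simp add: fobj_hessian_bound_nonneg)
  fix Y assume "norm (Y - Ar) < 1 / (4 * K)"
  then have small: "2 * K * (2 * norm (Y - Ar)) \<le> 1" using \<open>0 < K\<close> by (simp add: field_simps)
  have coer_A': "sylvester_coercive A Y (2 * K)"
    by (rule sylvester_coercive_perturb[OF coer_A]) (use small in simp)
  have coer_Y: "sylvester_coercive Y Y (2 * K)"
    by (rule sylvester_coercive_perturb[OF coer_Ar]) (use small in simp)
  let ?h = "norm (Y - Ar)"
  have P: "norm (sylvester_sol Y Y ?RP - sylvester_sol Ar Ar ?RP
      - sylvester_sol Ar Ar (sylvester (Y - Ar) (Y - Ar) (sylvester_sol Ar Ar ?RP)))
    \<le> 8 * K^3 * norm ?RP * ?h^2"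
    using norm_sylvester_sol_remainder_le[OF coer_Ar coer_Y, of ?RP]
    by (simp add: power2_eq_square power3_eq_cube algebra_simps)
  have X: "norm (sylvester_sol A Y ?RX - sylvester_sol A Ar ?RX
      - sylvester_sol A Ar (sylvester 0 (Y - Ar) (sylvester_sol A Ar ?RX)))
    \<le> 2 * K^3 * norm ?RX * ?h^2"
    using norm_sylvester_sol_remainder_le[OF coer_A coer_A', of ?RX]
    by (simp add: power2_eq_square power3_eq_cube algebra_simps)
  have "\<bar>fobj A B C Y Br Cr - fobj A B C Ar Br Cr - fobj_deriv A B C Br Cr Ar (Y - Ar)\<bar>
      = \<bar>gramian_objective Cr C
          (sylvester_sol Y Y ?RP - sylvester_sol Ar Ar ?RP
            - sylvester_sol Ar Ar (sylvester (Y - Ar) (Y - Ar) (sylvester_sol Ar Ar ?RP)))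
          (sylvester_sol A Y ?RX - sylvester_sol A Ar ?RX
            - sylvester_sol A Ar (sylvester 0 (Y - Ar) (sylvester_sol A Ar ?RX)))\<bar>"
    by (simp add: fobj_eq_gramian_objective fobj_deriv_def gramian_objective_diff)
  also have "\<dots> \<le> real CARD('p) * norm Cr * (norm Cr * (8 * K^3 * norm ?RP * ?h^2) + 2 * K^3 * norm ?RX * ?h^2 * norm C)"
    using P X by (intro order_trans[OF abs_gramian_objective_le] mult_left_mono add_mono mult_right_mono) auto
  finally show "\<bar>fobj A B C Y Br Cr - fobj A B C Ar Br Cr - fobj_deriv A B C Br Cr Ar (Y - Ar)\<bar>
      \<le> fobj_hessian_bound K B C Br Cr * ?h^2"
    by (simp add: fobj_hessian_bound_def algebra_simps)
qed

lemma the_gradient_eq: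
  fixes f :: "'a::real_inner \<Rightarrow> real"
  assumes "(f has_derivative (\<lambda>h. g \<bullet> h)) (at x)"
  shows "(THE g. (f has_derivative (\<lambda>h. g \<bullet> h)) (at x)) = g"
proof (rule the_equality)
  show "(f has_derivative (\<lambda>h. g \<bullet> h)) (at x)" by (rule assms)
next
  fix g' assume "(f has_derivative (\<lambda>h. g' \<bullet> h)) (at x)"
  then have "(\<lambda>h. g' \<bullet> h) = (\<lambda>h. g \<bullet> h)" using assms by (rule has_derivative_unique)
  then have "g' \<bullet> (g' - g) = g \<bullet> (g' - g)" by metis
  then have "(g' - g) \<bullet> (g' - g) = 0" by (simp add: inner_diff_left)
  then show "g' = g" by simp
qed

lemma inner_grad_Ar:
  assumes coer_A: "sylvester_coercive A Ar K" and coer_Ar: "sylvester_coercive Ar Ar K" and "0 < K"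
  shows "grad_Ar A B C Ar Br Cr \<bullet> H = fobj_deriv A B C Br Cr Ar H"
proof -
  let ?L = "fobj_deriv A B C Br Cr Ar"
  have lin: "linear ?L" by (rule linear_fobj_deriv[OF coer_A coer_Ar])
  have riesz: "?L = (\<lambda>H. adjoint ?L 1 \<bullet> H)"
    using adjoint_works[OF lin, of _ 1] by (simp add: fun_eq_iff inner_commute)
  have "((\<lambda>X. fobj A B C X Br Cr) has_derivative (\<lambda>H. adjoint ?L 1 \<bullet> H)) (at Ar)"
    using has_derivative_fobj[OF coer_A coer_Ar \<open>0 < K\<close>] riesz by simp
  then have "grad_Ar A B C Ar Br Cr = adjoint ?L 1" unfolding grad_Ar_def by (rule the_gradient_eq)
  then show ?thesis by (subst riesz) simp
qed

lemma fobj_deriv_lipschitz: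
  fixes A :: "real^'n::finite^'n" and B :: "real^'m::finite^'n" and C :: "real^'n^'p::finite"
    and Br :: "real^'m^'r::finite" and Cr :: "real^'r^'p"
  assumes "sylvester_coercive A Ar1 K" "sylvester_coercive Ar1 Ar1 K"
    and "sylvester_coercive A Ar2 K" "sylvester_coercive Ar2 Ar2 K"
  shows "\<bar>fobj_deriv A B C Br Cr Ar1 H - fobj_deriv A B C Br Cr Ar2 H\<bar>
    \<le> fobj_hessian_bound K B C Br Cr * norm H * norm (Ar1 - Ar2)"
proof -
  let ?RP = "Br ** transpose Br" and ?RX = "B ** transpose Br" and ?d = "norm (Ar1 - Ar2)"
  have P: "norm (sylvester_sol Ar1 Ar1 (sylvester H H (sylvester_sol Ar1 Ar1 ?RP))
      - sylvester_sol Ar2 Ar2 (sylvester H H (sylvester_sol Ar2 Ar2 ?RP)))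
    \<le> 8 * K^3 * norm ?RP * norm H * ?d"
    using norm_sylvester_sol_directional_diff_le[OF assms(4) assms(2), of H H ?RP] by (simp add: mult_ac)
  have X: "norm (sylvester_sol A Ar1 (sylvester 0 H (sylvester_sol A Ar1 ?RX))
      - sylvester_sol A Ar2 (sylvester 0 H (sylvester_sol A Ar2 ?RX)))
    \<le> 2 * K^3 * norm ?RX * norm H * ?d"
    using norm_sylvester_sol_directional_diff_le[OF assms(3) assms(1), of 0 H ?RX] by (simp add: mult_ac)
  have "\<bar>fobj_deriv A B C Br Cr Ar1 H - fobj_deriv A B C Br Cr Ar2 H\<bar>
    \<le> real CARD('p) * norm Cr * (norm Cr * (8 * K^3 * norm ?RP * norm H * ?d)
        + 2 * K^3 * norm ?RX * norm H * ?d * norm C)"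
    unfolding fobj_deriv_def gramian_objective_diff[symmetric] using P X
    by (intro order_trans[OF abs_gramian_objective_le] mult_left_mono add_mono mult_right_mono) auto
  then show ?thesis by (simp add: fobj_hessian_bound_def algebra_simps)
qed

lemma norm_grad_Ar_diff_le:
  fixes A :: "real^'n::finite^'n" and B :: "real^'m::finite^'n" and C :: "real^'n^'p::finite"
    and Br :: "real^'m^'r::finite" and Cr :: "real^'r^'p"
  assumes "sylvester_coercive A Ar1 K" "sylvester_coercive Ar1 Ar1 K"
    and "sylvester_coercive A Ar2 K" "sylvester_coercive Ar2 Ar2 K" and "0 < K"
  shows "norm (grad_Ar A B C Ar1 Br Cr - grad_Ar A B C Ar2 Br Cr)
    \<le> fobj_hessian_bound K B C Br Cr * norm (Ar1 - Ar2)"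
proof -
  let ?D = "grad_Ar A B C Ar1 Br Cr - grad_Ar A B C Ar2 Br Cr"
  have "norm ?D * norm ?D = grad_Ar A B C Ar1 Br Cr \<bullet> ?D - grad_Ar A B C Ar2 Br Cr \<bullet> ?D"
    by (simp add: inner_diff_left flip: dot_square_norm power2_eq_square)
  also have "\<dots> = fobj_deriv A B C Br Cr Ar1 ?D - fobj_deriv A B C Br Cr Ar2 ?D"
    by (simp only: inner_grad_Ar[OF assms(1,2,5)] inner_grad_Ar[OF assms(3,4,5)])
  also have "\<dots> \<le> fobj_hessian_bound K B C Br Cr * norm (Ar1 - Ar2) * norm ?D"
    using fobj_deriv_lipschitz[OF assms(1-4), of B C Br Cr ?D] by (simp add: mult_ac)
  finally show ?thesis
    using fobj_hessian_bound_nonneg[of K B C Br Cr] \<open>0 < K\<close>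
    by (cases "?D = 0") (simp_all add: mult_le_cancel_right_pos)
qed

lemma fobj_hessian_bound_le:
  fixes C :: "real^'n::finite^'p::finite"
  assumes "0 \<le> K"
  shows "fobj_hessian_bound K B C Br Cr
    \<le> (real CARD('p) * 2 * K^3 * norm B * norm C + real CARD('p) * 8 * K^3 * norm Br * norm Cr)
       * norm Br * norm Cr"
proof -
  have RP: "norm (Br ** transpose Br) \<le> norm Br * norm Br"
    using norm_matrix_mult_le[of Br "transpose Br"] by (simp add: norm_transpose)
  have RX: "norm (B ** transpose Br) \<le> norm B * norm Br"
    using norm_matrix_mult_le[of B "transpose Br"] by (simp add: norm_transpose)
  have "fobj_hessian_bound K B C Br Cr \<le> real CARD('p) * norm Cr
      * (norm Cr * (8 * K^3 * (norm Br * norm Br)) + 2 * K^3 * (norm B * norm Br) * norm C)"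
    unfolding fobj_hessian_bound_def using assms RP RX
    by (intro mult_left_mono add_mono mult_right_mono) auto
  then show ?thesis by (simp add: algebra_simps)
qed

lemma obtain_uniform_sylvester_coercive:
  fixes A :: "real^'n::finite^'n" and v :: "real^'r::finite" and S :: "(real^'r^'r) set"
  assumes stable: "stable A" and metzler: "metzler A" and v_pos: "\<forall>i. 0 < v$i" and "0 < eps"
    and S: "\<And>M. M \<in> S \<Longrightarrow> metzler M \<and> (\<forall>i. (M *v v)$i \<le> - eps * v$i)"
  obtains K where "0 < K" and "\<And>M. M \<in> S \<Longrightarrow> sylvester_coercive A M K \<and> sylvester_coercive M M K"
proof -
  obtain w where w_pos: "\<forall>i. 0 < w$i" and "\<forall>i. (A *v w)$i < 0 * w$i"
    using stable_metzler_has_pos_subeigenvector[OF stable metzler]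
    unfolding has_pos_subeigenvector_def by blast
  then obtain a where "0 < a" and "\<forall>i. (A *v w)$i \<le> (0 - a) * w$i"
    using pos_subeigenvector_margin by blast
  then have Aw: "\<forall>i. (A *v w)$i \<le> - a * w$i" by simp
  define K where "K = max 1 (max
    ((\<Sum>k\<in>UNIV. w$k) * (\<Sum>l\<in>UNIV. v$l) / ((a + eps) * (Min (range (\<lambda>k. w$k)) * Min (range (\<lambda>l. v$l)))))
    ((\<Sum>k\<in>UNIV. v$k) * (\<Sum>l\<in>UNIV. v$l) / ((eps + eps) * (Min (range (\<lambda>k. v$k)) * Min (range (\<lambda>l. v$l))))))"
  show thesis
  proof
    show "0 < K" by (simp add: K_def)
    fix M assume "M \<in> S"
    then have M: "metzler M" and Mv: "\<forall>i. (M *v v)$i \<le> - eps * v$i" using S by auto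
    show "sylvester_coercive A M K \<and> sylvester_coercive M M K"
      using sylvester_coercive_metzler[OF metzler M w_pos v_pos Aw Mv]
        sylvester_coercive_metzler[OF M M v_pos v_pos Mv Mv] \<open>0 < a\<close> \<open>0 < eps\<close>
      unfolding K_def by (auto elim!: sylvester_coercive_mono)
  qed
qed

lemma grad_Ar_lipschitz_on_metzler:
  fixes A :: "real^'n::finite^'n" and B :: "real^'m::finite^'n" and C :: "real^'n^'p::finite"
    and v :: "real^'r::finite" and S :: "(real^'r^'r) set"
  assumes stable: "stable A" and metzler: "metzler A" and v_pos: "\<forall>i. 0 < v$i" and "0 < eps"
    and S: "\<And>M. M \<in> S \<Longrightarrow> metzler M \<and> (\<forall>i. (M *v v)$i \<le> - eps * v$i)"
  shows "\<exists>c1 c2. c1 > 0 \<and> c2 > 0 \<and> (\<forall>Ar1\<in>S. \<forall>Ar2\<in>S. \<forall>(Br::real^'m^'r) (Cr::real^'r^'p).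
    norm (grad_Ar A B C Ar1 Br Cr - grad_Ar A B C Ar2 Br Cr)
      \<le> (c1 + c2 * norm Br * norm Cr) * norm Br * norm Cr * norm (Ar1 - Ar2))"
proof -
  obtain K where "0 < K" and coer: "\<And>M. M \<in> S \<Longrightarrow> sylvester_coercive A M K \<and> sylvester_coercive M M K"
    using obtain_uniform_sylvester_coercive[OF stable metzler v_pos \<open>0 < eps\<close> S] by blast
  define c1 where "c1 = real CARD('p) * 2 * K^3 * norm B * norm C + 1"
  define c2 where "c2 = real CARD('p) * 8 * K^3 + 1"
  have "norm (grad_Ar A B C Ar1 Br Cr - grad_Ar A B C Ar2 Br Cr)
      \<le> (c1 + c2 * norm Br * norm Cr) * norm Br * norm Cr * norm (Ar1 - Ar2)"
    if "Ar1 \<in> S" "Ar2 \<in> S" for Ar1 Ar2 and Br :: "real^'m^'r" and Cr :: "real^'r^'p"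
  proof -
    have "(c1 + c2 * norm Br * norm Cr) * norm Br * norm Cr
        = (real CARD('p) * 2 * K^3 * norm B * norm C + real CARD('p) * 8 * K^3 * norm Br * norm Cr)
            * norm Br * norm Cr + (norm Br * norm Cr + norm Br * norm Cr * (norm Br * norm Cr))"
      by (simp add: c1_def c2_def algebra_simps)
    moreover have "0 \<le> norm Br * norm Cr + norm Br * norm Cr * (norm Br * norm Cr)" by simp
    ultimately have "fobj_hessian_bound K B C Br Cr \<le> (c1 + c2 * norm Br * norm Cr) * norm Br * norm Cr"
      using fobj_hessian_bound_le[of K B C Br Cr] \<open>0 < K\<close> by linarith
    then show ?thesis
      using norm_grad_Ar_diff_le[of A Ar1 K Ar2 B C Br Cr] coer[OF that(1)] coer[OF that(2)] \<open>0 < K\<close>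
      by (meson mult_right_mono norm_ge_zero order_trans)
  qed
  moreover have "0 < c1" "0 < c2"
    using \<open>0 < K\<close> unfolding c1_def c2_def by (simp_all add: add_nonneg_pos)
  ultimately show ?thesis by blast
qed

lemma deflation_eigenvector:
  assumes "A0 *v v = mu *s v" and "w \<bullet> v = 1"
  shows "(A0 - c *\<^sub>R (\<chi> k l. v$k * w$l)) *v v = (mu - c) *s (v :: real^'r::finite)"
proof -
  have "(\<chi> k l. v$k * w$l) *v v = (w \<bullet> v) *s v"
    by (simp add: matrix_vector_mult_def inner_vec_def vec_eq_iff sum_distrib_left mult_ac)
  then show ?thesis
    using assms by (simp add: matrix_vector_mult_diff_rdistrib scaleR_matrix_vector_assoc[symmetric]
        vec_eq_iff algebra_simps)
qed

lemma matrix_vector_mult_mono_pos: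
  fixes M N :: "real^'r::finite^'r"
  assumes "\<forall>i j. M$i$j \<le> N$i$j" and "\<forall>j. 0 \<le> v$j"
  shows "(M *v v)$i \<le> (N *v v)$i"
  using assms unfolding matrix_vector_mult_def by (auto intro!: sum_mono mult_right_mono)

lemma le_deflation_imp_metzler_decay:
  fixes A0 M :: "real^'r::finite^'r"
  assumes v_eig: "A0 *v v = mu *s v" and wv: "w \<bullet> v = 1" and v_pos: "\<forall>i. 0 < v$i"
    and bounds: "\<forall>i j. - gamma * (mat 1 :: real^'r^'r)$i$j \<le> M$i$j
                   \<and> M$i$j \<le> (A0 - (mu + eps) *\<^sub>R (\<chi> k l. v$k * w$l))$i$j"
  shows "metzler M \<and> (\<forall>i. (M *v v)$i \<le> - eps * v$i)"
proof
  show "metzler M"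
    unfolding metzler_def
  proof (intro allI impI)
    fix i j :: 'r assume "i \<noteq> j"
    then show "0 \<le> M$i$j" using bounds[rule_format, of i j] by (simp add: mat_def)
  qed
  show "\<forall>i. (M *v v)$i \<le> - eps * v$i"
  proof
    fix i
    have "(M *v v)$i \<le> ((A0 - (mu + eps) *\<^sub>R (\<chi> k l. v$k * w$l)) *v v)$i"
      by (rule matrix_vector_mult_mono_pos) (use bounds v_pos in \<open>auto simp: less_imp_le\<close>)
    also have "\<dots> = - eps * v$i" by (simp add: deflation_eigenvector[OF v_eig wv])
    finally show "(M *v v)$i \<le> - eps * v$i" .
  qed
qed

theorem theorem3:
  fixes A :: "real^'n::finite^'n" and B :: "real^'m::finite^'n" and C :: "real^'n^'p::finite"
    and cl :: "'n \<Rightarrow> 'r::finite" and alpha :: real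
    and mu1 :: real and v1 w1 :: "real^'r"
    and eps gamma :: real
  assumes A_stable: "stable A" and A_metzler: "metzler A"
    and B_nonneg: "\<forall>i j. B$i$j \<ge> 0" and C_nonneg: "\<forall>i j. C$i$j \<ge> 0"
    and cl_surj: "surj cl"
    and alpha_nonneg: "alpha \<ge> 0"
    and A0_stable: "stable (matrix_inv (transpose (part_mat cl) ** part_mat cl)
                       ** transpose (part_mat cl) ** A ** part_mat cl - alpha *\<^sub>R mat 1)"
    and A0_irred: "irreducible_mat (matrix_inv (transpose (part_mat cl) ** part_mat cl)
                       ** transpose (part_mat cl) ** A ** part_mat cl - alpha *\<^sub>R mat 1)"
    and mu1_neg: "mu1 < 0"
    and mu1_dom: "\<forall>lam. is_eigenvalue (matrix_inv (transpose (part_mat cl) ** part_mat cl)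
                       ** transpose (part_mat cl) ** A ** part_mat cl - alpha *\<^sub>R mat 1) lam
                     \<longrightarrow> lam \<noteq> complex_of_real mu1 \<longrightarrow> Re lam < mu1"
    and v1_pos: "\<forall>i. v1$i > 0" and w1_pos: "\<forall>i. w1$i > 0"
    and v1_eig: "(matrix_inv (transpose (part_mat cl) ** part_mat cl)
                   ** transpose (part_mat cl) ** A ** part_mat cl - alpha *\<^sub>R mat 1) *v v1 = mu1 *s v1"
    and w1_eig: "w1 v* (matrix_inv (transpose (part_mat cl) ** part_mat cl)
                   ** transpose (part_mat cl) ** A ** part_mat cl - alpha *\<^sub>R mat 1) = mu1 *s w1"
    and w1v1: "w1 \<bullet> v1 = 1"
    and eps_pos: "eps > 0" and eps_le: "mu1 + eps \<le> 0"
    and gamma_pos: "gamma > 0"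
    and gamma_le: "\<forall>i j. - gamma * (mat 1 :: real^'r^'r)$i$j
                  \<le> (matrix_inv (transpose (part_mat cl) ** part_mat cl)
                   ** transpose (part_mat cl) ** A ** part_mat cl - alpha *\<^sub>R mat 1)$i$j"
  shows "\<exists>c1 c2. c1 > 0 \<and> c2 > 0 \<and>
    (\<forall>Ar1 Ar2 :: real^'r^'r. \<forall>Br :: real^'m^'r. \<forall>Cr :: real^'r^'p.
      (\<forall>i j. - gamma * (mat 1 :: real^'r^'r)$i$j \<le> Ar1$i$j \<and>
         Ar1$i$j \<le> ((matrix_inv (transpose (part_mat cl) ** part_mat cl)
                   ** transpose (part_mat cl) ** A ** part_mat cl - alpha *\<^sub>R mat 1)
                   - (mu1 + eps) *\<^sub>R (\<chi> k l. v1$k * w1$l))$i$j) \<longrightarrow>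
      (\<forall>i j. - gamma * (mat 1 :: real^'r^'r)$i$j \<le> Ar2$i$j \<and>
         Ar2$i$j \<le> ((matrix_inv (transpose (part_mat cl) ** part_mat cl)
                   ** transpose (part_mat cl) ** A ** part_mat cl - alpha *\<^sub>R mat 1)
                   - (mu1 + eps) *\<^sub>R (\<chi> k l. v1$k * w1$l))$i$j) \<longrightarrow>
      norm (grad_Ar A B C Ar1 Br Cr - grad_Ar A B C Ar2 Br Cr)
        \<le> (c1 + c2 * norm Br * norm Cr) * norm Br * norm Cr * norm (Ar1 - Ar2))"
proof -
  let ?A0 = "matrix_inv (transpose (part_mat cl) ** part_mat cl)
               ** transpose (part_mat cl) ** A ** part_mat cl - alpha *\<^sub>R mat 1"
  let ?S = "{M. \<forall>i j. - gamma * (mat 1 :: real^'r^'r)$i$j \<le> M$i$j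
                 \<and> M$i$j \<le> (?A0 - (mu1 + eps) *\<^sub>R (\<chi> k l. v1$k * w1$l))$i$j}"
  have "metzler M \<and> (\<forall>i. (M *v v1)$i \<le> - eps * v1$i)" if "M \<in> ?S" for M
    using le_deflation_imp_metzler_decay[OF v1_eig w1v1 v1_pos] that by blast
  then obtain c1 c2 where "0 < c1" "0 < c2" and lipschitz: "\<forall>Ar1\<in>?S. \<forall>Ar2\<in>?S. \<forall>Br Cr.
      norm (grad_Ar A B C Ar1 Br Cr - grad_Ar A B C Ar2 Br Cr)
        \<le> (c1 + c2 * norm Br * norm Cr) * norm Br * norm Cr * norm (Ar1 - Ar2)"
    using grad_Ar_lipschitz_on_metzler[OF A_stable A_metzler v1_pos eps_pos, where S = ?S] by blast
  then show ?thesis by blast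
qed

end
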